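(* Let $\mathcal{T}$ be a tangle of order $k$ in a connectivity system $(E,\lambda)$. Let $n\geq 4$, and let $\Phi=(P_1,\ldots,P_n)$ be a $\mathcal{T}$-strong partition of $E$. If $P_i\cup P_{i+1}$ is $k$-separating for each $i\in \{1,\dots,n-1\}$, then $\Phi$ is a $k$-flower in $\mathcal{T}$.
   Context: A connectivity system is a pair $(E,\lambda)$ with $E$ finite and $\lambda$ an integer-valued symmetric ($\lambda(X)=\lambda(E-X)$) submodular function on subsets of $E$. $X$ is $k$-separating if $\lambda(X)\le k$. A tangle of order $k$ is a collection $\mathcal T$ of subsets of $E$ with (T1) $\lambda(A)<k$ for $A\in\mathcal T$; (T2) if $\lambda(A)\le k-1$ then $A\in\mathcal T$ or $E-A\in\mathcal T$; (T3) $A\cup B\cup C\ne E$ for $A,B,C\in\mathcal T$; (T4) $E-\{e\}\notin\mathcal T$ for $e\in E$. A set is $\mathcal T$-weak if contained in a member of $\mathcal T$, and $\mathcal T$-strong otherwise; a partition is $\mathcal T$-strong if all its parts are. A $k$-flower in $\mathcal T$ is a $\mathcal T$-strong partition $(P_1,\dots,P_n)$ of $E$ such that for every $i$, both $P_i$ and $P_i\cup P_{i+1}$ are $k$-separating, subscripts taken modulo $n$. *)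

theory Defs
  imports Main
begin

definition connectivity_system :: "'a set \<Rightarrow> ('a set \<Rightarrow> int) \<Rightarrow> bool" where
  "connectivity_system E lam \<longleftrightarrow> finite E
     \<and> (\<forall>X. X \<subseteq> E \<longrightarrow> lam X = lam (E - X))
     \<and> (\<forall>X Y. X \<subseteq> E \<longrightarrow> Y \<subseteq> E \<longrightarrow> lam X + lam Y \<ge> lam (X \<union> Y) + lam (X \<inter> Y))"

definition k_separating :: "('a set \<Rightarrow> int) \<Rightarrow> int \<Rightarrow> 'a set \<Rightarrow> bool" where
  "k_separating lam k X \<longleftrightarrow> lam X \<le> k"

definition tangle :: "'a set \<Rightarrow> ('a set \<Rightarrow> int) \<Rightarrow> int \<Rightarrow> 'a set set \<Rightarrow> bool" where
  "tangle E lam k T \<longleftrightarrow> T \<subseteq> Pow E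
     \<and> (\<forall>A\<in>T. lam A < k)
     \<and> (\<forall>A. A \<subseteq> E \<longrightarrow> lam A \<le> k - 1 \<longrightarrow> A \<in> T \<or> E - A \<in> T)
     \<and> (\<forall>A\<in>T. \<forall>B\<in>T. \<forall>C\<in>T. A \<union> B \<union> C \<noteq> E)
     \<and> (\<forall>e\<in>E. E - {e} \<notin> T)"

definition T_weak :: "'a set set \<Rightarrow> 'a set \<Rightarrow> bool" where
  "T_weak T X \<longleftrightarrow> (\<exists>A\<in>T. X \<subseteq> A)"

definition T_strong :: "'a set set \<Rightarrow> 'a set \<Rightarrow> bool" where
  "T_strong T X \<longleftrightarrow> \<not> T_weak T X"

definition is_partition :: "'a set \<Rightarrow> nat \<Rightarrow> (nat \<Rightarrow> 'a set) \<Rightarrow> bool" where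
  "is_partition E n P \<longleftrightarrow> (\<forall>i\<in>{1..n}. P i \<noteq> {})
     \<and> (\<forall>i\<in>{1..n}. \<forall>j\<in>{1..n}. i \<noteq> j \<longrightarrow> P i \<inter> P j = {})
     \<and> (\<Union>i\<in>{1..n}. P i) = E"

definition strong_partition :: "'a set set \<Rightarrow> 'a set \<Rightarrow> nat \<Rightarrow> (nat \<Rightarrow> 'a set) \<Rightarrow> bool" where
  "strong_partition T E n P \<longleftrightarrow> is_partition E n P \<and> (\<forall>i\<in>{1..n}. T_strong T (P i))"

text \<open>Cyclic successor of index i in {1..n}: i+1, with n+1 read as 1.\<close>
definition cyc_succ :: "nat \<Rightarrow> nat \<Rightarrow> nat" where
  "cyc_succ n i = (i mod n) + 1"

definition k_flower :: "('a set \<Rightarrow> int) \<Rightarrow> int \<Rightarrow> 'a set set \<Rightarrow> 'a set \<Rightarrow> nat \<Rightarrow> (nat \<Rightarrow> 'a set) \<Rightarrow> bool" where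
  "k_flower lam k T E n P \<longleftrightarrow> strong_partition T E n P
     \<and> (\<forall>i\<in>{1..n}. k_separating lam k (P i) \<and> k_separating lam k (P i \<union> P (cyc_succ n i)))"

end

theory Submission
  imports Defs
begin

text \<open>If a set and its complement are both \<open>\<T>\<close>-strong, neither lies in \<open>\<T>\<close>, so by (T2)
  its connectivity is at least \<open>k\<close>. Hence submodularity, applied to two \<open>k\<close>-separating sets
  whose union and the complement of the union are strong, shows that their intersection is
  \<open>k\<close>-separating; dually for the union. Each part \<open>P\<^sub>i\<close> is the intersection of \<open>P\<^sub>i \<union> P\<^sub>i\<^sub>+\<^sub>1\<close>
  with the complement of \<open>P\<^sub>i\<^sub>+\<^sub>1 \<union> P\<^sub>i\<^sub>+\<^sub>2\<close> (or the mirror image near the end, which is where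
  \<open>n \<ge> 4\<close> is needed). Uncrossing unions along the chain then shows that \<open>P\<^sub>2 \<union> \<dots> \<union> P\<^sub>n\<^sub>-\<^sub>1\<close>
  is \<open>k\<close>-separating, and its complement is \<open>P\<^sub>n \<union> P\<^sub>1\<close>.\<close>

lemma T_strong_mono: "T_strong T A \<Longrightarrow> A \<subseteq> B \<Longrightarrow> T_strong T B"
  by (auto simp: T_strong_def T_weak_def)

lemma T_strong_not_member: "T_strong T A \<Longrightarrow> A \<notin> T"
  by (auto simp: T_strong_def T_weak_def)

lemma tangle_strong_sides_order_ge:
  assumes "tangle E lam k T" "B \<subseteq> E" "T_strong T B" "T_strong T (E - B)"
  shows "k \<le> lam B"
proof (rule ccontr)
  assume "\<not> k \<le> lam B"
  with assms(1,2) have "B \<in> T \<or> E - B \<in> T" unfolding tangle_def by auto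
  with assms(3,4) show False by (auto dest: T_strong_not_member)
qed

lemma connectivity_system_compl:
  "connectivity_system E lam \<Longrightarrow> X \<subseteq> E \<Longrightarrow> lam (E - X) = lam X"
  unfolding connectivity_system_def by metis

lemma connectivity_system_submodular:
  "connectivity_system E lam \<Longrightarrow> X \<subseteq> E \<Longrightarrow> Y \<subseteq> E \<Longrightarrow>
    lam (X \<union> Y) + lam (X \<inter> Y) \<le> lam X + lam Y"
  unfolding connectivity_system_def by blast

lemma tangle_uncross_inter:
  assumes "connectivity_system E lam" "tangle E lam k T" "X \<subseteq> E" "Y \<subseteq> E"
    and "k_separating lam k X" "k_separating lam k Y"
    and "S \<subseteq> X \<union> Y" "T_strong T S" "S' \<subseteq> E - (X \<union> Y)" "T_strong T S'"
  shows "k_separating lam k (X \<inter> Y)"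
proof -
  have "k \<le> lam (X \<union> Y)"
    using assms(3,4,7-10) by (intro tangle_strong_sides_order_ge[OF assms(2)]) (auto intro: T_strong_mono)
  with connectivity_system_submodular[OF assms(1,3,4)] assms(5,6) show ?thesis
    unfolding k_separating_def by linarith
qed

lemma tangle_uncross_union:
  assumes "connectivity_system E lam" "tangle E lam k T" "X \<subseteq> E" "Y \<subseteq> E"
    and "k_separating lam k X" "k_separating lam k Y"
    and "S \<subseteq> X \<inter> Y" "T_strong T S" "S' \<subseteq> E - (X \<inter> Y)" "T_strong T S'"
  shows "k_separating lam k (X \<union> Y)"
proof -
  have "k \<le> lam (X \<inter> Y)"
    using assms(3,4,7-10) by (intro tangle_strong_sides_order_ge[OF assms(2)]) (auto intro: T_strong_mono)
  with connectivity_system_submodular[OF assms(1,3,4)] assms(5,6) show ?thesis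
    unfolding k_separating_def by linarith
qed

lemma tangle_k_separating_end_of_chain:
  assumes "connectivity_system E lam" "tangle E lam k T" "A \<subseteq> E" "B \<subseteq> E" "C \<subseteq> E"
    and "A \<inter> B = {}" "A \<inter> C = {}" "B \<inter> C = {}" "T_strong T A" "T_strong T C"
    and "k_separating lam k (A \<union> B)" "k_separating lam k (B \<union> C)"
  shows "k_separating lam k A"
proof -
  have "k_separating lam k (E - (B \<union> C))"
    using assms(12) connectivity_system_compl[OF assms(1), of "B \<union> C"] assms(4,5)
    unfolding k_separating_def by simp
  then have "k_separating lam k ((A \<union> B) \<inter> (E - (B \<union> C)))"
    using assms by (intro tangle_uncross_inter[where S = A and S' = C]) auto
  moreover have "(A \<union> B) \<inter> (E - (B \<union> C)) = A"
    using assms(3,6,7) by auto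
  ultimately show ?thesis by simp
qed

lemma is_partition_part_subset: "is_partition E n P \<Longrightarrow> i \<in> {1..n} \<Longrightarrow> P i \<subseteq> E"
  unfolding is_partition_def by auto

lemma is_partition_parts_disjoint:
  "is_partition E n P \<Longrightarrow> i \<in> {1..n} \<Longrightarrow> j \<in> {1..n} \<Longrightarrow> i \<noteq> j \<Longrightarrow> P i \<inter> P j = {}"
  unfolding is_partition_def by auto

lemma is_partition_compl_inner_parts:
  assumes "is_partition E n P" "1 \<le> n"
  shows "E - (\<Union>i\<in>{2..n-1}. P i) = P 1 \<union> P n"
proof -
  have "E = (\<Union>i\<in>{1..n}. P i)" using assms(1) unfolding is_partition_def by simp
  also have "{1..n} = {2..n-1} \<union> {1, n}" using assms(2) by auto
  finally have E: "E = (\<Union>i\<in>{2..n-1}. P i) \<union> P 1 \<union> P n" by auto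
  have "P 1 \<inter> P i = {}" "P n \<inter> P i = {}" if "i \<in> {2..n-1}" for i
    by (rule is_partition_parts_disjoint[OF assms(1)]; use that assms(2) in auto)+
  then show ?thesis by (subst E) blast
qed

context
  fixes E :: "'a set" and lam :: "'a set \<Rightarrow> int" and k :: int
    and T :: "'a set set" and n :: nat and P :: "nat \<Rightarrow> 'a set"
  assumes cs: "connectivity_system E lam"
    and tg: "tangle E lam k T"
    and n: "n \<ge> 4"
    and sp: "strong_partition T E n P"
    and adj: "\<forall>i\<in>{1..n-1}. k_separating lam k (P i \<union> P (i + 1))"
begin

private lemma partition: "is_partition E n P"
  using sp unfolding strong_partition_def by simp

private lemma subset: "i \<in> {1..n} \<Longrightarrow> P i \<subseteq> E"
  using is_partition_part_subset[OF partition] .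

private lemma disjoint: "i \<in> {1..n} \<Longrightarrow> j \<in> {1..n} \<Longrightarrow> i \<noteq> j \<Longrightarrow> P i \<inter> P j = {}"
  using is_partition_parts_disjoint[OF partition] .

private lemma strong: "i \<in> {1..n} \<Longrightarrow> T_strong T (P i)"
  using sp unfolding strong_partition_def by simp

lemma flower_part_k_separating:
  assumes i: "i \<in> {1..n}"
  shows "k_separating lam k (P i)"
proof (cases "i + 2 \<le> n")
  case True
  then have idx: "i + 1 \<in> {1..n}" "i + 2 \<in> {1..n}" "i \<in> {1..n-1}" "i + 1 \<in> {1..n-1}"
    using i by auto
  show ?thesis
  proof (rule tangle_k_separating_end_of_chain[OF cs tg])
    show "P i \<subseteq> E" "P (i + 1) \<subseteq> E" "P (i + 2) \<subseteq> E"
      using i idx by (simp_all add: subset)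
    show "P i \<inter> P (i + 1) = {}" "P i \<inter> P (i + 2) = {}" "P (i + 1) \<inter> P (i + 2) = {}"
      using i idx by (simp_all add: disjoint)
    show "T_strong T (P i)" "T_strong T (P (i + 2))"
      using i idx by (simp_all add: strong)
    show "k_separating lam k (P i \<union> P (i + 1))" "k_separating lam k (P (i + 1) \<union> P (i + 2))"
      using adj idx by (simp_all add: numeral_2_eq_2)
  qed
next
  case False
  with i n have "3 \<le> i" by auto
  then have idx: "i - 1 \<in> {1..n}" "i - 2 \<in> {1..n}" "i - 1 \<in> {1..n-1}" "i - 2 \<in> {1..n-1}"
    and succ: "i - 1 + 1 = i" "i - 2 + 1 = i - 1"
    using i by auto
  show ?thesis
  proof (rule tangle_k_separating_end_of_chain[OF cs tg])
    show "P i \<subseteq> E" "P (i - 1) \<subseteq> E" "P (i - 2) \<subseteq> E"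
      using i idx by (simp_all add: subset)
    show "P i \<inter> P (i - 1) = {}" "P i \<inter> P (i - 2) = {}" "P (i - 1) \<inter> P (i - 2) = {}"
      using i idx \<open>3 \<le> i\<close> by (simp_all add: disjoint)
    show "T_strong T (P i)" "T_strong T (P (i - 2))"
      using i idx by (simp_all add: strong)
    show "k_separating lam k (P i \<union> P (i - 1))" "k_separating lam k (P (i - 1) \<union> P (i - 2))"
      using adj idx succ by (metis Un_commute)+
  qed
qed

lemma flower_inner_parts_k_separating:
  assumes "2 \<le> j" "j \<le> n - 1"
  shows "k_separating lam k (\<Union>i\<in>{2..j}. P i)"
  using assms
proof (induction j rule: nat_induct_at_least)
  case base
  then show ?case using flower_part_k_separating by simp
next
  case (Suc j)
  let ?V = "\<Union>i\<in>{2..j}. P i"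
  have V: "?V \<subseteq> E" and pair: "P j \<union> P (Suc j) \<subseteq> E"
    using Suc.hyps Suc.prems by (intro UN_least Un_least subset; auto)+
  have "P 1 \<subseteq> E" "P 1 \<inter> P j = {}" "P 1 \<inter> P (Suc j) = {}"
    using Suc.hyps Suc.prems by (simp_all add: subset disjoint)
  then have P1: "P 1 \<subseteq> E - (?V \<inter> (P j \<union> P (Suc j)))" by blast
  have Pj: "P j \<subseteq> ?V \<inter> (P j \<union> P (Suc j))"
    using Suc.hyps by auto
  have "k_separating lam k (P j \<union> P (Suc j))" "T_strong T (P j)" "T_strong T (P 1)"
    using Suc.hyps Suc.prems adj by (simp_all add: strong)
  then have "k_separating lam k (?V \<union> (P j \<union> P (Suc j)))"
    using tangle_uncross_union[OF cs tg V pair Suc.IH _ Pj _ P1] Suc.hyps Suc.prems by simp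
  moreover have "?V \<union> (P j \<union> P (Suc j)) = (\<Union>i\<in>{2..Suc j}. P i)"
    using Suc.hyps by (auto simp: atLeastAtMostSuc_conv)
  ultimately show ?case by simp
qed

lemma flower_last_first_k_separating: "k_separating lam k (P n \<union> P 1)"
proof -
  have "(\<Union>i\<in>{2..n-1}. P i) \<subseteq> E" by (intro UN_least subset) auto
  with flower_inner_parts_k_separating[of "n - 1"] n
  have "k_separating lam k (E - (\<Union>i\<in>{2..n-1}. P i))"
    unfolding k_separating_def by (simp add: connectivity_system_compl[OF cs])
  with is_partition_compl_inner_parts[OF partition] n show ?thesis
    by (simp add: Un_commute)
qed

end

theorem lemma4p2:
  fixes E :: "'a set" and lam :: "'a set \<Rightarrow> int" and k :: int
    and T :: "'a set set" and n :: nat and P :: "nat \<Rightarrow> 'a set"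
  assumes "connectivity_system E lam"
    and "tangle E lam k T"
    and "n \<ge> 4"
    and "strong_partition T E n P"
    and "\<forall>i\<in>{1..n-1}. k_separating lam k (P i \<union> P (i + 1))"
  shows "k_flower lam k T E n P"
  unfolding k_flower_def
proof (intro conjI ballI)
  fix i assume i: "i \<in> {1..n}"
  show "k_separating lam k (P i)"
    using flower_part_k_separating[OF assms i] .
  show "k_separating lam k (P i \<union> P (cyc_succ n i))"
  proof (cases "i = n")
    case True
    then show ?thesis
      using flower_last_first_k_separating[OF assms] by (simp add: cyc_succ_def)
  next
    case False
    with i have "cyc_succ n i = i + 1" by (simp add: cyc_succ_def)
    moreover have "i \<in> {1..n-1}" using False i by auto
    ultimately show ?thesis using assms(5) by simp
  qed
qed (use assms(4) in simp)

end
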